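(* Let $a,b,c,d$ be positive integers. Then for every positive integer $t$, $$i((a,b,c,d),t)=i((d,c,b,a),t)=\sum_{j=0}^{t\min\{a,d\}}F(a,b,j,t)\,F(c,d,-j,t).$$
   Context: For $S,T\subseteq[n]$, write $T\le S$ if $|T|=|S|$ and the $i$-th smallest element of $T$ is at most the $i$-th smallest element of $S$ for each $i$. The Schubert matroid $\mathrm{SM}_n(S)$ is the matroid on $[n]$ with bases $\{T\subseteq[n]:T\le S\}$; $i(M,t)$ is the number of lattice points in the $t$-th dilate of the matroid polytope $\mathrm{conv}\{\sum_{b\in B}e_b: B\text{ a basis of }M\}$. For a sequence $r=(r_1,\dots,r_{2m})$ of integers with $r_1\ge0$, $r_i>0$ for $i\ge2$, let $n=\sum r_i$ and let $S\subseteq[n]$ have indicator vector $(0^{r_1},1^{r_2},\dots,0^{r_{2m-1}},1^{r_{2m}})$ ($x^p$ = $p$ consecutive copies of $x$); $i(r,t):=i(\mathrm{SM}_n(S),t)$. For integers $a,b\ge0$ with $a+b\ge1$, $c\in\mathbb Z$, $t\ge0$: $F(a,b,c,t)=\sum_{j=0}^{a+b}(-1)^j\binom{a+b}{j}\binom{(t+1)(b-j)+a+c-1}{a+b-1}$, with $\binom00=1$ and $\binom NK=0$ if $K<0$ or $N<K$. *)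

theory Defs
  imports Complex_Main
begin

definition gale_le :: "nat set \<Rightarrow> nat set \<Rightarrow> bool" where
  "gale_le T S \<longleftrightarrow> card T = card S \<and>
     (\<forall>i < card S. sorted_list_of_set T ! i \<le> sorted_list_of_set S ! i)"

definition schubert_bases :: "nat \<Rightarrow> nat set \<Rightarrow> nat set set" where
  "schubert_bases n S = {T. T \<subseteq> {1..n} \<and> gale_le T S}"

(* Membership in the dilated convex hull of the
   finite set of basis indicator vectors is written out as a convex combination. *)
definition in_dilated_polytope :: "nat \<Rightarrow> nat set set \<Rightarrow> nat \<Rightarrow> (nat \<Rightarrow> real) \<Rightarrow> bool" where
  "in_dilated_polytope n \<B> t x \<longleftrightarrow>
     (\<exists>l :: nat set \<Rightarrow> real. (\<forall>B\<in>\<B>. l B \<ge> 0) \<and> (\<Sum>B\<in>\<B>. l B) = 1 \<and>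
        (\<forall>k\<in>{1..n}. x k = real t * (\<Sum>B\<in>\<B>. l B * (if k \<in> B then 1 else 0))))"

definition ehrhart :: "nat \<Rightarrow> nat set set \<Rightarrow> nat \<Rightarrow> nat" where
  "ehrhart n \<B> t = card {x :: nat \<Rightarrow> int. (\<forall>k. k \<notin> {1..n} \<longrightarrow> x k = 0) \<and>
        in_dilated_polytope n \<B> t (\<lambda>k. real_of_int (x k))}"

fun ind_word :: "bool \<Rightarrow> nat list \<Rightarrow> bool list" where
  "ind_word b [] = []"
| "ind_word b (k # rs) = replicate k b @ ind_word (\<not> b) rs"

definition schubert_set :: "nat list \<Rightarrow> nat set" where
  "schubert_set r = {k. 1 \<le> k \<and> k \<le> sum_list r \<and> ind_word False r ! (k - 1)}"

definition i_r :: "nat list \<Rightarrow> nat \<Rightarrow> nat" where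
  "i_r r t = ehrhart (sum_list r) (schubert_bases (sum_list r) (schubert_set r)) t"

definition binom :: "int \<Rightarrow> int \<Rightarrow> int" where
  "binom N K = (if K < 0 \<or> N < K then 0 else int (nat N choose nat K))"

definition F :: "nat \<Rightarrow> nat \<Rightarrow> int \<Rightarrow> nat \<Rightarrow> int" where
  "F a b c t = (\<Sum>j = 0..a+b. (-1) ^ j * int ((a+b) choose j) *
       binom ((int t + 1) * (int b - int j) + int a + c - 1) (int a + int b - 1))"

end

theory Submission
  imports Defs
begin

text \<open>
  For \<open>S\<close> with indicator word \<open>0\<^sup>a 1\<^sup>b 0\<^sup>c 1\<^sup>d\<close>, a \<open>(b + d)\<close>-set is Gale-below \<open>S\<close> iff
  it has at least \<open>b\<close> elements in \<open>[a + b]\<close>. Hence every point of the \<open>t\<close>-th dilate of the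
  matroid polytope lies in the box \<open>[0, t]\<^sup>n\<close>, has coordinate sum \<open>t(b + d)\<close> and sum at
  least \<open>tb\<close> over \<open>[a + b]\<close>. Conversely every integer point with these properties is a sum of
  \<open>t\<close> bases, obtained by rounding the partial sums \<open>(x\<^sub>1 + \<dots> + x\<^sub>k + L) / t\<close>,
  \<open>L = 0, \<dots>, t - 1\<close>. Writing \<open>tb + j\<close> for the sum over \<open>[a + b]\<close>, the lattice points split
  into pairs of compositions with parts in \<open>[0, t]\<close>, which are counted by inclusion-exclusion
  as \<open>F\<close>. Reversing \<open>r\<close> amounts to replacing every part \<open>v\<close> by \<open>t - v\<close>.
\<close>

lemma sorted_list_of_set_nth_le_iff:
  fixes B :: "nat set"
  assumes fin: "finite B" and i: "i < card B"
  shows "sorted_list_of_set B ! i \<le> m \<longleftrightarrow> i < card (B \<inter> {..m})"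
proof -
  define xs where "xs = sorted_list_of_set B"
  have len: "length xs = card B" and sorted: "sorted xs" and dist: "distinct xs"
    and set_xs: "set xs = B"
    using fin by (auto simp: xs_def)
  have card_prefix: "card (nth xs ` {..<j}) = j" if "j \<le> card B" for j
    using that dist len by (subst card_image) (auto intro: inj_on_nth)
  show ?thesis
  proof
    assume le: "sorted_list_of_set B ! i \<le> m"
    have "nth xs ` {..<Suc i} \<subseteq> B \<inter> {..m}"
    proof
      fix y assume "y \<in> nth xs ` {..<Suc i}"
      then obtain j where j: "j \<le> i" "y = xs ! j" by (auto simp: less_Suc_eq_le)
      have "xs ! j \<le> xs ! i" using sorted j i len by (simp add: sorted_nth_mono)
      moreover have "xs ! j \<in> B" using j i len set_xs by (metis nth_mem order.strict_trans1)
      ultimately show "y \<in> B \<inter> {..m}" using le j by (simp add: xs_def)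
    qed
    then have "card (nth xs ` {..<Suc i}) \<le> card (B \<inter> {..m})"
      using fin by (intro card_mono) auto
    then show "i < card (B \<inter> {..m})" using card_prefix[of "Suc i"] i by simp
  next
    assume lt: "i < card (B \<inter> {..m})"
    show "sorted_list_of_set B ! i \<le> m"
    proof (rule ccontr)
      assume "\<not> ?thesis"
      then have gt: "m < xs ! i" by (simp add: xs_def)
      have "B \<inter> {..m} \<subseteq> nth xs ` {..<i}"
      proof
        fix y assume y: "y \<in> B \<inter> {..m}"
        then obtain j where j: "j < length xs" "y = xs ! j"
          using set_xs by (auto simp: in_set_conv_nth)
        have "j < i"
        proof (rule ccontr)
          assume "\<not> j < i"
          then have "xs ! i \<le> xs ! j" using sorted j by (simp add: sorted_nth_mono)
          with gt y j show False by auto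
        qed
        with j show "y \<in> nth xs ` {..<i}" by auto
      qed
      then have "card (B \<inter> {..m}) \<le> i"
        using card_mono[of "nth xs ` {..<i}"] card_prefix[of i] i by simp
      with lt show False by simp
    qed
  qed
qed

lemma card_Int_atMost_le_add:
  assumes "finite T" "m \<le> m'"
  shows "card (T \<inter> {..m'}) \<le> card (T \<inter> {..m}) + (m' - m)"
proof -
  have "card (T \<inter> {..m'}) \<le> card (T \<inter> {..m} \<union> {m<..m'})"
    using assms by (intro card_mono) auto
  also have "\<dots> \<le> card (T \<inter> {..m}) + card {m<..m'}"
    by (rule card_Un_le)
  finally show ?thesis by simp
qed

lemma schubert_set_4: "schubert_set [a,b,c,d] = {a+1..a+b} \<union> {a+b+c+1..a+b+c+d}"
  by (auto simp: schubert_set_def nth_append)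

lemma sorted_list_of_schubert_set_4:
  "sorted_list_of_set (schubert_set [a,b,c,d]) = [a+1..<a+b+1] @ [a+b+c+1..<a+b+c+d+1]"
proof -
  have "schubert_set [a,b,c,d] = set ([a+1..<a+b+1] @ [a+b+c+1..<a+b+c+d+1])"
    by (auto simp: schubert_set_4)
  moreover have "sorted_list_of_set (set ([a+1..<a+b+1] @ [a+b+c+1..<a+b+c+d+1]))
      = [a+1..<a+b+1] @ [a+b+c+1..<a+b+c+d+1]"
    by (rule sorted_distinct_set_unique) (auto simp: sorted_append)
  ultimately show ?thesis by simp
qed

lemma card_schubert_set_4: "card (schubert_set [a,b,c,d]) = b + d"
proof -
  have "card (schubert_set [a,b,c,d]) = length (sorted_list_of_set (schubert_set [a,b,c,d]))"
    by simp
  then show ?thesis by (simp add: sorted_list_of_schubert_set_4)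
qed

lemma nth_sorted_list_of_schubert_set_4:
  assumes "i < b + d"
  shows "sorted_list_of_set (schubert_set [a,b,c,d]) ! i = (if i < b then a + 1 + i else a + c + 1 + i)"
  using assms by (simp add: sorted_list_of_schubert_set_4 nth_append del: upt_Suc)

lemma gale_le_iff_card_Int_atMost:
  assumes "finite T"
  shows "gale_le T S \<longleftrightarrow>
    card T = card S \<and> (\<forall>i < card S. i < card (T \<inter> {..sorted_list_of_set S ! i}))"
  using sorted_list_of_set_nth_le_iff[OF assms] by (auto simp: gale_le_def)

text \<open>The Gale condition against \<open>0\<^sup>a 1\<^sup>b 0\<^sup>c 1\<^sup>d\<close> only binds at position \<open>b\<close>:
  the other positions follow because a set can lose at most one element per unit of
  lowering the threshold.\<close>

lemma gale_le_schubert_set_4_iff: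
  assumes T: "T \<subseteq> {1..a+b+c+d}" and b: "0 < b"
  shows "gale_le T (schubert_set [a,b,c,d]) \<longleftrightarrow> card T = b + d \<and> b \<le> card (T \<inter> {..a+b})"
proof -
  have fin: "finite T" using T finite_subset by blast
  have T_atMost: "T \<inter> {..a+b+c+d} = T" using T by auto
  let ?S = "sorted_list_of_set (schubert_set [a,b,c,d])"
  have "(\<forall>i < b + d. i < card (T \<inter> {..?S ! i})) \<longleftrightarrow> b \<le> card (T \<inter> {..a+b})"
    if card_T: "card T = b + d"
  proof
    assume "\<forall>i < b + d. i < card (T \<inter> {..?S ! i})"
    then have "b - 1 < card (T \<inter> {..?S ! (b - 1)})" using b by simp
    then show "b \<le> card (T \<inter> {..a+b})" using b by (simp add: nth_sorted_list_of_schubert_set_4)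
  next
    assume prefix: "b \<le> card (T \<inter> {..a+b})"
    show "\<forall>i < b + d. i < card (T \<inter> {..?S ! i})"
    proof (intro allI impI)
      fix i assume i: "i < b + d"
      show "i < card (T \<inter> {..?S ! i})"
      proof (cases "i < b")
        case True
        then show ?thesis
          using card_Int_atMost_le_add[OF fin, of "a + 1 + i" "a + b"] prefix i
          by (simp add: nth_sorted_list_of_schubert_set_4)
      next
        case False
        then show ?thesis
          using card_Int_atMost_le_add[OF fin, of "a + c + 1 + i" "a + b + c + d"] card_T i
          by (simp add: nth_sorted_list_of_schubert_set_4 T_atMost)
      qed
    qed
  qed
  then show ?thesis
    unfolding gale_le_iff_card_Int_atMost[OF fin] card_schubert_set_4 by blast
qed

lemma finite_schubert_bases: "finite (schubert_bases n S)"
  by (rule finite_subset[of _ "Pow {1..n}"]) (auto simp: schubert_bases_def)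

lemma in_dilated_polytope_sum_bounds:
  assumes P: "in_dilated_polytope n Bs t x" and fin: "finite Bs" and A: "A \<subseteq> {1..n}"
    and bounds: "\<And>B. B \<in> Bs \<Longrightarrow> r \<le> card (B \<inter> A) \<and> card (B \<inter> A) \<le> s"
  shows "real (t * r) \<le> (\<Sum>k\<in>A. x k) \<and> (\<Sum>k\<in>A. x k) \<le> real (t * s)"
proof -
  obtain l where l_nonneg: "\<forall>B\<in>Bs. 0 \<le> l B" and l_sum: "(\<Sum>B\<in>Bs. l B) = 1"
    and x: "\<forall>k\<in>{1..n}. x k = real t * (\<Sum>B\<in>Bs. l B * (if k \<in> B then 1 else 0))"
    using P unfolding in_dilated_polytope_def by blast
  have finA: "finite A" using A finite_subset by blast
  have "(\<Sum>k\<in>A. x k) = real t * (\<Sum>B\<in>Bs. \<Sum>k\<in>A. l B * (if k \<in> B then 1 else 0))"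
    using x A by (simp add: sum_distrib_left subset_iff sum.swap[of _ A])
  also have "\<dots> = real t * (\<Sum>B\<in>Bs. l B * real (card (B \<inter> A)))"
    using finA by (simp add: sum_distrib_left[symmetric] sum.If_cases Int_commute)
  finally have sum_A: "(\<Sum>k\<in>A. x k) = real t * (\<Sum>B\<in>Bs. l B * real (card (B \<inter> A)))" .
  have "real r = (\<Sum>B\<in>Bs. l B * real r)" using l_sum by (simp add: sum_distrib_right[symmetric])
  also have "\<dots> \<le> (\<Sum>B\<in>Bs. l B * real (card (B \<inter> A)))"
    using bounds l_nonneg by (intro sum_mono mult_left_mono) auto
  finally have lower: "real r \<le> (\<Sum>B\<in>Bs. l B * real (card (B \<inter> A)))" .
  have "(\<Sum>B\<in>Bs. l B * real (card (B \<inter> A))) \<le> (\<Sum>B\<in>Bs. l B * real s)"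
    using bounds l_nonneg by (intro sum_mono mult_left_mono) auto
  also have "\<dots> = real s" using l_sum by (simp add: sum_distrib_right[symmetric])
  finally have upper: "(\<Sum>B\<in>Bs. l B * real (card (B \<inter> A))) \<le> real s" .
  show ?thesis using lower upper by (simp add: sum_A mult_left_mono)
qed

lemma in_dilated_polytope_of_layers:
  assumes fin: "finite Bs" and t: "0 < t" and layers: "\<And>L. L < t \<Longrightarrow> P L \<in> Bs"
    and x: "\<And>k. k \<in> {1..n} \<Longrightarrow> x k = real (card {L\<in>{..<t}. k \<in> P L})"
  shows "in_dilated_polytope n Bs t x"
proof -
  define l where "l B = real (card {L\<in>{..<t}. P L = B}) / real t" for B
  have card_fibres: "card A = (\<Sum>B\<in>Bs. card {L\<in>A. P L = B})" if "A \<subseteq> {..<t}" for A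
  proof -
    have "finite A" using that finite_subset by blast
    moreover have "P ` A \<subseteq> Bs" using that layers by auto
    ultimately show ?thesis using sum.group[of A Bs P "\<lambda>_. 1::nat"] fin by auto
  qed
  have "(\<Sum>B\<in>Bs. l B) = real (\<Sum>B\<in>Bs. card {L\<in>{..<t}. P L = B}) / real t"
    by (simp add: l_def sum_divide_distrib)
  also have "\<dots> = 1" using card_fibres[of "{..<t}"] t by simp
  finally have l_sum: "(\<Sum>B\<in>Bs. l B) = 1" .
  have "x k = real t * (\<Sum>B\<in>Bs. l B * (if k \<in> B then 1 else 0))" if k: "k \<in> {1..n}" for k
  proof -
    define A where "A = {L\<in>{..<t}. k \<in> P L}"
    have "real t * (\<Sum>B\<in>Bs. l B * (if k \<in> B then 1 else 0)) = (\<Sum>B\<in>Bs. real (card {L\<in>A. P L = B}))"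
      unfolding sum_distrib_left
    proof (rule sum.cong)
      fix B
      show "real t * (l B * (if k \<in> B then 1 else 0)) = real (card {L\<in>A. P L = B})"
      proof (cases "k \<in> B")
        case True
        then have "{L\<in>A. P L = B} = {L\<in>{..<t}. P L = B}" by (auto simp: A_def)
        then show ?thesis using True t by (simp add: l_def)
      qed (auto simp: A_def)
    qed simp
    also have "\<dots> = real (card A)"
    proof -
      have "A \<subseteq> {..<t}" by (auto simp: A_def)
      from card_fibres[OF this] show ?thesis by (simp add: of_nat_sum)
    qed
    also have "\<dots> = x k" using x[OF k] by (simp add: A_def)
    finally show ?thesis by simp
  qed
  moreover have "\<forall>B\<in>Bs. 0 \<le> l B" by (simp add: l_def)
  ultimately show ?thesis using l_sum unfolding in_dilated_polytope_def by blast
qed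

lemma hermite_identity_nat:
  assumes "0 < t"
  shows "(\<Sum>L<t. (v + L) div t) = (v::nat)"
proof (induction v)
  case (Suc v)
  have "(\<Sum>L<t. (v + L) div t) + (v + t) div t = v div t + (\<Sum>L<t. (v + Suc L) div t)"
    using sum.lessThan_Suc_shift[of "\<lambda>L. (v + L) div t" t] by simp
  moreover have "(v + t) div t = v div t + 1" using assms by simp
  ultimately have "(\<Sum>L<t. (v + Suc L) div t) = Suc v" using Suc.IH by linarith
  then show ?case by simp
qed simp

locale rounding_layers =
  fixes t n :: nat and y :: "nat \<Rightarrow> nat"
  assumes t_pos: "0 < t" and y_le: "\<And>k. k \<in> {1..n} \<Longrightarrow> y k \<le> t"
begin

text \<open>Since \<open>y \<le> t\<close>, the level \<open>\<lfloor>(y\<^sub>1 + \<dots> + y\<^sub>k + L) / t\<rfloor>\<close> rises by at most one per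
  step; the layer \<open>L\<close> collects the steps where it rises. By Hermite's identity the
  layers \<open>L < t\<close> decompose \<open>y\<close> into \<open>t\<close> indicator vectors.\<close>

definition level :: "nat \<Rightarrow> nat \<Rightarrow> nat" where
  "level L k = ((\<Sum>i\<in>{1..k}. y i) + L) div t"

definition layer :: "nat \<Rightarrow> nat set" where
  "layer L = {k\<in>{1..n}. level L (k - 1) < level L k}"

lemma level_Suc_le:
  assumes "Suc k \<le> n"
  shows "level L k \<le> level L (Suc k) \<and> level L (Suc k) \<le> level L k + 1"
proof -
  let ?v = "(\<Sum>i\<in>{1..k}. y i) + L"
  have "level L (Suc k) = (?v + y (Suc k)) div t" by (simp add: level_def algebra_simps)
  moreover have "(?v + y (Suc k)) div t \<le> (?v + t) div t"
    using y_le[of "Suc k"] assms by (intro div_le_mono) simp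
  moreover have "(?v + t) div t = ?v div t + 1" using t_pos by simp
  ultimately show ?thesis by (simp add: level_def div_le_mono)
qed

lemma card_layer_Int_atLeastAtMost:
  assumes "L < t" "k \<le> n"
  shows "card (layer L \<inter> {1..k}) = level L k"
  using assms(2)
proof (induction k)
  case 0
  then show ?case using assms(1) by (simp add: level_def)
next
  case (Suc k)
  then have IH: "card (layer L \<inter> {1..k}) = level L k" by simp
  show ?case
  proof (cases "Suc k \<in> layer L")
    case True
    then have "layer L \<inter> {1..Suc k} = insert (Suc k) (layer L \<inter> {1..k})" by (auto simp: layer_def)
    then show ?thesis using True IH level_Suc_le[OF Suc.prems, of L] by (simp add: layer_def)
  next
    case False
    then have "layer L \<inter> {1..Suc k} = layer L \<inter> {1..k}" by (auto simp: layer_def le_Suc_eq)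
    then show ?thesis using False IH Suc.prems level_Suc_le[OF Suc.prems, of L] by (simp add: layer_def)
  qed
qed

lemma layer_subset: "layer L \<subseteq> {1..n}"
  by (auto simp: layer_def)

lemma card_layers_containing:
  assumes k: "k \<in> {1..n}"
  shows "card {L\<in>{..<t}. k \<in> layer L} = y k"
proof -
  obtain j where j: "k = Suc j" using k by (cases k) auto
  have step: "level L j \<le> level L k \<and> level L k \<le> level L j + 1" for L
    using level_Suc_le[of j L] j k by simp
  have "card {L\<in>{..<t}. k \<in> layer L} = (\<Sum>L<t. if k \<in> layer L then 1 else 0)"
    by (simp add: sum.If_cases Collect_conj_eq Int_commute lessThan_def)
  also have "\<dots> = (\<Sum>L<t. level L k - level L j)"
  proof (intro sum.cong refl)
    fix L
    show "(if k \<in> layer L then 1 else 0) = level L k - level L j"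
      using step[of L] k j by (auto simp: layer_def)
  qed
  also have "\<dots> = (\<Sum>L<t. level L k) - (\<Sum>L<t. level L j)"
    using step by (intro sum_subtractf_nat) auto
  also have "\<dots> = (\<Sum>i\<in>{1..k}. y i) - (\<Sum>i\<in>{1..j}. y i)"
    unfolding level_def using hermite_identity_nat[OF t_pos] by simp
  also have "\<dots> = y k" using j by simp
  finally show ?thesis .
qed

end

lemma in_dilated_polytope_schubert_set_4I:
  fixes y :: "nat \<Rightarrow> nat"
  assumes b: "0 < b" and t: "0 < t"
    and y_le: "\<And>k. k \<in> {1..a+b+c+d} \<Longrightarrow> y k \<le> t"
    and total: "(\<Sum>k\<in>{1..a+b+c+d}. y k) = t * (b + d)"
    and prefix: "t * b \<le> (\<Sum>k\<in>{1..a+b}. y k)"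
    and x: "\<And>k. k \<in> {1..a+b+c+d} \<Longrightarrow> x k = real (y k)"
  shows "in_dilated_polytope (a+b+c+d) (schubert_bases (a+b+c+d) (schubert_set [a,b,c,d])) t x"
proof -
  interpret rounding_layers t "a+b+c+d" y
    using t y_le by unfold_locales
  have "layer L \<in> schubert_bases (a+b+c+d) (schubert_set [a,b,c,d])" if L: "L < t" for L
  proof -
    have "card (layer L) = level L (a+b+c+d)"
      using card_layer_Int_atLeastAtMost[OF L, of "a+b+c+d"] layer_subset by (simp add: Int_absorb2)
    also have "\<dots> = (t * (b + d) + L) div t" unfolding level_def total ..
    also have "\<dots> = b + d" using L t by simp
    finally have card_layer: "card (layer L) = b + d" .
    have "layer L \<inter> {..a+b} = layer L \<inter> {1..a+b}" using layer_subset[of L] by auto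
    then have "card (layer L \<inter> {..a+b}) = level L (a+b)"
      using card_layer_Int_atLeastAtMost[OF L, of "a+b"] by simp
    also have "\<dots> \<ge> (t * b) div t" unfolding level_def using prefix by (intro div_le_mono) simp
    finally have "b \<le> card (layer L \<inter> {..a+b})" using t by simp
    with card_layer show ?thesis
      using gale_le_schubert_set_4_iff[OF layer_subset b] layer_subset
      by (simp add: schubert_bases_def)
  qed
  then show ?thesis
  proof (rule in_dilated_polytope_of_layers[OF finite_schubert_bases t])
    fix k assume k: "k \<in> {1..a+b+c+d}"
    from card_layers_containing[OF k] x[OF k]
    show "x k = real (card {L\<in>{..<t}. k \<in> layer L})" by simp
  qed
qed

lemma schubert_set_4_constraints:
  assumes b: "0 < b"
    and P: "in_dilated_polytope (a+b+c+d) (schubert_bases (a+b+c+d) (schubert_set [a,b,c,d])) t x"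
  shows "\<forall>k\<in>{1..a+b+c+d}. 0 \<le> x k \<and> x k \<le> real t"
    and "(\<Sum>k\<in>{1..a+b+c+d}. x k) = real (t * (b + d))"
    and "real (t * b) \<le> (\<Sum>k\<in>{1..a+b}. x k)"
proof -
  let ?Bs = "schubert_bases (a+b+c+d) (schubert_set [a,b,c,d])"
  have base: "B \<subseteq> {1..a+b+c+d} \<and> card B = b + d \<and> b \<le> card (B \<inter> {..a+b})" if "B \<in> ?Bs" for B
    using that gale_le_schubert_set_4_iff[of B a b c d] b by (auto simp: schubert_bases_def)
  note bounds = in_dilated_polytope_sum_bounds[OF P finite_schubert_bases]
  show "\<forall>k\<in>{1..a+b+c+d}. 0 \<le> x k \<and> x k \<le> real t"
  proof
    fix k assume "k \<in> {1..a+b+c+d}"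
    then show "0 \<le> x k \<and> x k \<le> real t"
      using bounds[of "{k}" 0 1] by (simp add: card_le_Suc0_iff_eq)
  qed
  show "(\<Sum>k\<in>{1..a+b+c+d}. x k) = real (t * (b + d))"
    using bounds[of "{1..a+b+c+d}" "b + d" "b + d"] base by (simp add: Int_absorb2)
  show "real (t * b) \<le> (\<Sum>k\<in>{1..a+b}. x k)"
  proof -
    have "b \<le> card (B \<inter> {1..a+b}) \<and> card (B \<inter> {1..a+b}) \<le> a + b" if "B \<in> ?Bs" for B
    proof -
      have "B \<inter> {1..a+b} = B \<inter> {..a+b}" using base[OF that] by auto
      moreover have "card (B \<inter> {1..a+b}) \<le> card {1..a+b}" by (intro card_mono) auto
      ultimately show ?thesis using base[OF that] by simp
    qed
    then show ?thesis using bounds[of "{1..a+b}" b "a + b"] by simp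
  qed
qed

lemma sum_list_take_map_upt:
  assumes "m \<le> n"
  shows "sum_list (take m (map f [1..<n+1])) = (\<Sum>k\<in>{1..m}. f k)"
proof -
  have "take m (map f [1..<n+1]) = map f [1..<m+1]"
    using assms by (simp add: take_map take_upt del: upt_Suc)
  moreover have "{1..m} = set [1..<m+1]" by auto
  ultimately show ?thesis by (simp only: sum_set_upt_conv_sum_list_nat)
qed

lemma card_nonneg_lattice_points_eq_card_lists:
  "card {x :: nat \<Rightarrow> int. (\<forall>k. k \<notin> {1..n} \<longrightarrow> x k = 0) \<and> (\<forall>k\<in>{1..n}. 0 \<le> x k)
      \<and> map (\<lambda>k. nat (x k)) [1..<n+1] \<in> A}
   = card {xs\<in>A. length xs = n}"
  (is "card ?X = card ?L")
proof -
  define to_list where "to_list x = map (\<lambda>k. nat (x k)) [1..<n+1]" for x :: "nat \<Rightarrow> int"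
  define of_list where "of_list xs k = (if k \<in> {1..n} then int (xs ! (k - 1)) else 0)" for xs k
  have of_to: "of_list (to_list x) = x" if "x \<in> ?X" for x
  proof
    fix k
    show "of_list (to_list x) k = x k"
    proof (cases "k \<in> {1..n}")
      case True
      then have "to_list x ! (k - 1) = nat (x k)" by (auto simp: to_list_def simp del: upt_Suc)
      then show ?thesis using True that by (simp add: of_list_def)
    qed (use that in \<open>auto simp: of_list_def\<close>)
  qed
  have to_of: "to_list (of_list xs) = xs" if "length xs = n" for xs
    using that by (intro nth_equalityI) (auto simp: to_list_def of_list_def simp del: upt_Suc)
  have "bij_betw to_list ?X ?L"
  proof (rule bij_betw_byWitness[where f' = of_list])
    show "to_list ` ?X \<subseteq> ?L" by (auto simp: to_list_def)
    show "of_list ` ?L \<subseteq> ?X"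
    proof
      fix x assume "x \<in> of_list ` ?L"
      then obtain xs where "xs \<in> A" "length xs = n" and x: "x = of_list xs" by blast
      then have "to_list x \<in> A" using to_of[of xs] by simp
      then show "x \<in> ?X" unfolding mem_Collect_eq to_list_def[symmetric] by (simp add: x of_list_def)
    qed
  qed (use of_to to_of in auto)
  then show ?thesis by (rule bij_betw_same_card)
qed

definition prefix_constrained_lists :: "nat \<Rightarrow> nat \<Rightarrow> nat \<Rightarrow> nat \<Rightarrow> nat \<Rightarrow> nat list set" where
  "prefix_constrained_lists a b c d t = {xs. length xs = a + b + c + d \<and> (\<forall>v\<in>set xs. v \<le> t)
      \<and> sum_list xs = t * (b + d) \<and> t * b \<le> sum_list (take (a + b) xs)}"

lemma real_sum_list_take_map_nat:
  fixes x :: "nat \<Rightarrow> int"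
  assumes "m \<le> n" and "\<forall>k\<in>{1..n}. 0 \<le> x k"
  shows "real (sum_list (take m (map (\<lambda>k. nat (x k)) [1..<n+1]))) = (\<Sum>k\<in>{1..m}. real_of_int (x k))"
proof -
  have "real (sum_list (take m (map (\<lambda>k. nat (x k)) [1..<n+1]))) = (\<Sum>k\<in>{1..m}. real (nat (x k)))"
    unfolding sum_list_take_map_upt[OF assms(1)] of_nat_sum ..
  also have "\<dots> = (\<Sum>k\<in>{1..m}. real_of_int (x k))" using assms by (intro sum.cong) auto
  finally show ?thesis .
qed

lemma prefix_constrained_list_of_lattice_point:
  fixes x :: "nat \<Rightarrow> int"
  assumes b: "0 < b"
    and P: "in_dilated_polytope (a+b+c+d) (schubert_bases (a+b+c+d) (schubert_set [a,b,c,d])) t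
      (\<lambda>k. real_of_int (x k))"
  shows "(\<forall>k\<in>{1..a+b+c+d}. 0 \<le> x k)
    \<and> map (\<lambda>k. nat (x k)) [1..<a+b+c+d+1] \<in> prefix_constrained_lists a b c d t"
proof -
  note constraints = schubert_set_4_constraints[OF b P]
  let ?xs = "map (\<lambda>k. nat (x k)) [1..<a+b+c+d+1]"
  have box: "\<forall>k\<in>{1..a+b+c+d}. 0 \<le> x k \<and> x k \<le> int t"
  proof
    fix k assume "k \<in> {1..a+b+c+d}"
    with constraints(1) have "0 \<le> x k" "real_of_int (x k) \<le> real t" by auto
    then show "0 \<le> x k \<and> x k \<le> int t" by (metis of_int_le_iff of_int_of_nat_eq)
  qed
  then have "real (sum_list (take (a+b+c+d) ?xs)) = real (t * (b + d))"
    and "real (t * b) \<le> real (sum_list (take (a + b) ?xs))"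
    using real_sum_list_take_map_nat[of _ "a+b+c+d" x] constraints(2,3) by simp_all
  moreover have "set ?xs = (\<lambda>k. nat (x k)) ` {1..a+b+c+d}" by (auto simp del: upt_Suc)
  ultimately show ?thesis
    using box by (auto simp: prefix_constrained_lists_def nat_le_iff simp del: upt_Suc
        simp flip: of_nat_mult)
qed

lemma lattice_point_of_prefix_constrained_list:
  fixes x :: "nat \<Rightarrow> int"
  assumes b: "0 < b" and t: "0 < t" and nonneg: "\<forall>k\<in>{1..a+b+c+d}. 0 \<le> x k"
    and xs: "map (\<lambda>k. nat (x k)) [1..<a+b+c+d+1] \<in> prefix_constrained_lists a b c d t"
  shows "in_dilated_polytope (a+b+c+d) (schubert_bases (a+b+c+d) (schubert_set [a,b,c,d])) t
    (\<lambda>k. real_of_int (x k))"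
proof (rule in_dilated_polytope_schubert_set_4I[OF b t, where y = "\<lambda>k. nat (x k)"])
  note upt_Suc [simp del]
  let ?xs = "map (\<lambda>k. nat (x k)) [1..<a+b+c+d+1]"
  have "set ?xs = (\<lambda>k. nat (x k)) ` {1..a+b+c+d}" by auto
  then show "nat (x k) \<le> t" if "k \<in> {1..a+b+c+d}" for k
    using xs that by (auto simp: prefix_constrained_lists_def)
  have "sum_list (take (a+b+c+d) ?xs) = t * (b + d)" "t * b \<le> sum_list (take (a+b) ?xs)"
    using xs by (simp_all add: prefix_constrained_lists_def)
  then show "(\<Sum>k\<in>{1..a+b+c+d}. nat (x k)) = t * (b + d)" "t * b \<le> (\<Sum>k\<in>{1..a+b}. nat (x k))"
    by (simp_all only: sum_list_take_map_upt le_add1 order_refl)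
  show "real_of_int (x k) = real (nat (x k))" if "k \<in> {1..a+b+c+d}" for k
    using nonneg that by simp
qed

lemma i_r_schubert_set_4:
  assumes b: "0 < b" and t: "0 < t"
  shows "i_r [a,b,c,d] t = card (prefix_constrained_lists a b c d t)"
proof -
  define n where "n = a + b + c + d"
  have points: "in_dilated_polytope n (schubert_bases n (schubert_set [a,b,c,d])) t (\<lambda>k. real_of_int (x k))
      \<longleftrightarrow> (\<forall>k\<in>{1..n}. 0 \<le> x k) \<and> map (\<lambda>k. nat (x k)) [1..<n+1] \<in> prefix_constrained_lists a b c d t"
    for x
    using prefix_constrained_list_of_lattice_point[OF b] lattice_point_of_prefix_constrained_list[OF b t]
    unfolding n_def by blast
  have n: "sum_list [a,b,c,d] = n" by (simp add: n_def)
  have "i_r [a,b,c,d] t = card {x :: nat \<Rightarrow> int. (\<forall>k. k \<notin> {1..n} \<longrightarrow> x k = 0)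
      \<and> (\<forall>k\<in>{1..n}. 0 \<le> x k) \<and> map (\<lambda>k. nat (x k)) [1..<n+1] \<in> prefix_constrained_lists a b c d t}"
    unfolding i_r_def ehrhart_def n points by (simp del: upt_Suc)
  also have "\<dots> = card (prefix_constrained_lists a b c d t)"
    unfolding card_nonneg_lattice_points_eq_card_lists
    by (rule arg_cong[where f = card]) (auto simp: prefix_constrained_lists_def n_def)
  finally show ?thesis .
qed

definition bounded_lists :: "nat \<Rightarrow> nat \<Rightarrow> int \<Rightarrow> nat list set" where
  "bounded_lists t m N = {xs. length xs = m \<and> (\<forall>v\<in>set xs. v \<le> t) \<and> int (sum_list xs) = N}"

definition num_bounded_lists :: "nat \<Rightarrow> nat \<Rightarrow> int \<Rightarrow> int" where
  "num_bounded_lists t m N = int (card (bounded_lists t m N))"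

lemma finite_bounded_lists: "finite (bounded_lists t m N)"
proof (rule finite_subset)
  show "bounded_lists t m N \<subseteq> {xs. set xs \<subseteq> {0..t} \<and> length xs = m}"
    by (auto simp: bounded_lists_def)
  show "finite {xs. set xs \<subseteq> {0..t} \<and> length xs = m}"
    by (rule finite_lists_length_eq) simp
qed

lemma sum_list_le_length_mult:
  "\<forall>v\<in>set xs. v \<le> t \<Longrightarrow> sum_list xs \<le> t * length xs"
  by (induction xs) auto

lemma prefix_constrained_lists_split:
  "bij_betw (\<lambda>xs. (take (a + b) xs, drop (a + b) xs)) (prefix_constrained_lists a b c d t)
     (\<Union>j\<in>{0..int (t * min a d)}.
        bounded_lists t (a + b) (int t * int b + j) \<times> bounded_lists t (c + d) (int t * int d - j))"
proof (rule bij_betw_byWitness[where f' = "\<lambda>(ys, zs). ys @ zs"])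
  show "(\<lambda>xs. (take (a + b) xs, drop (a + b) xs)) ` prefix_constrained_lists a b c d t
      \<subseteq> (\<Union>j\<in>{0..int (t * min a d)}.
        bounded_lists t (a + b) (int t * int b + j) \<times> bounded_lists t (c + d) (int t * int d - j))"
  proof (rule image_subsetI)
    fix xs assume xs: "xs \<in> prefix_constrained_lists a b c d t"
    define ys where "ys = take (a + b) xs"
    define zs where "zs = drop (a + b) xs"
    have len: "length ys = a + b" "length zs = c + d" and le_t: "\<forall>v\<in>set ys. v \<le> t" "\<forall>v\<in>set zs. v \<le> t"
      and total: "sum_list ys + sum_list zs = t * (b + d)" and prefix: "t * b \<le> sum_list ys"
      using xs set_take_subset[of "a + b" xs] set_drop_subset[of "a + b" xs]
      by (auto simp: prefix_constrained_lists_def ys_def zs_def simp flip: sum_list_append)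
    define j where "j = int (sum_list ys) - int t * int b"
    have "sum_list ys \<le> t * (a + b)" using sum_list_le_length_mult[OF le_t(1)] len by simp
    then have "j \<le> int t * int a" by (simp add: j_def algebra_simps flip: of_nat_mult of_nat_add)
    moreover have "j \<le> int t * int d" using total by (simp add: j_def algebra_simps flip: of_nat_mult of_nat_add)
    moreover have "0 \<le> j" using prefix by (simp add: j_def flip: of_nat_mult)
    ultimately have "j \<in> {0..int (t * min a d)}" by (simp add: min_def)
    moreover have "ys \<in> bounded_lists t (a + b) (int t * int b + j)"
      using len le_t by (simp add: bounded_lists_def j_def)
    moreover have "zs \<in> bounded_lists t (c + d) (int t * int d - j)"
      using len le_t total by (simp add: bounded_lists_def j_def algebra_simps flip: of_nat_mult of_nat_add)
    ultimately show "(take (a + b) xs, drop (a + b) xs) \<in> (\<Union>j\<in>{0..int (t * min a d)}.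
        bounded_lists t (a + b) (int t * int b + j) \<times> bounded_lists t (c + d) (int t * int d - j))"
      by (auto simp: ys_def zs_def)
  qed
  show "(\<lambda>(ys, zs). ys @ zs) ` (\<Union>j\<in>{0..int (t * min a d)}.
        bounded_lists t (a + b) (int t * int b + j) \<times> bounded_lists t (c + d) (int t * int d - j))
      \<subseteq> prefix_constrained_lists a b c d t"
  proof (rule image_subsetI)
    fix p assume "p \<in> (\<Union>j\<in>{0..int (t * min a d)}.
        bounded_lists t (a + b) (int t * int b + j) \<times> bounded_lists t (c + d) (int t * int d - j))"
    then obtain j ys zs where p: "p = (ys, zs)" and j: "0 \<le> j"
      and ys: "ys \<in> bounded_lists t (a + b) (int t * int b + j)"
      and zs: "zs \<in> bounded_lists t (c + d) (int t * int d - j)" by auto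
    have "int (sum_list ys + sum_list zs) = int (t * (b + d))" "int (t * b) \<le> int (sum_list ys)"
      using ys zs j by (simp_all add: bounded_lists_def algebra_simps)
    then have "sum_list ys + sum_list zs = t * (b + d)" "t * b \<le> sum_list ys"
      by (simp_all only: of_nat_eq_iff of_nat_le_iff)
    then show "(\<lambda>(ys, zs). ys @ zs) p \<in> prefix_constrained_lists a b c d t"
      using ys zs by (auto simp: p bounded_lists_def prefix_constrained_lists_def)
  qed
qed (auto simp: bounded_lists_def)

lemma card_prefix_constrained_lists:
  "int (card (prefix_constrained_lists a b c d t)) = (\<Sum>j = 0..int (t * min a d).
      num_bounded_lists t (a + b) (int t * int b + j) * num_bounded_lists t (c + d) (int t * int d - j))"
proof -
  have "card (prefix_constrained_lists a b c d t) = (\<Sum>j = 0..int (t * min a d).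
      card (bounded_lists t (a + b) (int t * int b + j) \<times> bounded_lists t (c + d) (int t * int d - j)))"
    unfolding bij_betw_same_card[OF prefix_constrained_lists_split]
  proof (rule card_UN_disjoint)
    show "\<forall>j\<in>{0..int (t * min a d)}. finite (bounded_lists t (a + b) (int t * int b + j)
        \<times> bounded_lists t (c + d) (int t * int d - j))"
      by (simp add: finite_bounded_lists)
  qed (auto simp: bounded_lists_def)
  then show ?thesis by (simp add: num_bounded_lists_def card_cartesian_product)
qed

lemma bounded_lists_Suc:
  "bounded_lists t (Suc m) N = (\<Union>i\<in>{..t}. (\<lambda>xs. i # xs) ` bounded_lists t m (N - int i))"
proof
  show "bounded_lists t (Suc m) N \<subseteq> (\<Union>i\<in>{..t}. (\<lambda>xs. i # xs) ` bounded_lists t m (N - int i))"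
  proof
    fix xs assume "xs \<in> bounded_lists t (Suc m) N"
    then obtain i ys where "xs = i # ys" "i \<le> t" "ys \<in> bounded_lists t m (N - int i)"
      by (auto simp: bounded_lists_def length_Suc_conv)
    then show "xs \<in> (\<Union>i\<in>{..t}. (\<lambda>xs. i # xs) ` bounded_lists t m (N - int i))" by blast
  qed
qed (auto simp: bounded_lists_def)

lemma num_bounded_lists_Suc:
  "num_bounded_lists t (Suc m) N = (\<Sum>i\<le>t. num_bounded_lists t m (N - int i))"
proof -
  have "card (bounded_lists t (Suc m) N) = (\<Sum>i\<le>t. card ((\<lambda>xs. i # xs) ` bounded_lists t m (N - int i)))"
    unfolding bounded_lists_Suc by (rule card_UN_disjoint) (auto simp: finite_bounded_lists)
  also have "\<dots> = (\<Sum>i\<le>t. card (bounded_lists t m (N - int i)))"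
    by (rule sum.cong) (auto simp: card_image)
  finally show ?thesis by (simp add: num_bounded_lists_def)
qed

lemma num_bounded_lists_recurrence:
  "num_bounded_lists t (Suc m) N - num_bounded_lists t (Suc m) (N - 1)
     = num_bounded_lists t m N - num_bounded_lists t m (N - int t - 1)"
proof -
  have "(\<Sum>i\<le>t. num_bounded_lists t m (N - int i)) + num_bounded_lists t m (N - int t - 1)
      = (\<Sum>i\<le>Suc t. num_bounded_lists t m (N - int i))"
    by (simp add: algebra_simps)
  also have "\<dots> = num_bounded_lists t m N + (\<Sum>i\<le>t. num_bounded_lists t m (N - 1 - int i))"
    by (subst sum.atMost_Suc_shift) (simp add: algebra_simps)
  finally show ?thesis by (simp add: num_bounded_lists_Suc)
qed

lemma num_bounded_lists_neg: "N < 0 \<Longrightarrow> num_bounded_lists t m N = 0"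
  by (auto simp: num_bounded_lists_def bounded_lists_def)

lemma num_bounded_lists_one: "num_bounded_lists t 1 N = (if 0 \<le> N \<and> N \<le> int t then 1 else 0)"
proof (cases "0 \<le> N \<and> N \<le> int t")
  case True
  then have "bounded_lists t 1 N = {[nat N]}"
    by (auto simp: bounded_lists_def length_Suc_conv nat_le_iff)
  then show ?thesis using True by (simp add: num_bounded_lists_def)
next
  case False
  then have "bounded_lists t 1 N = {}" by (auto simp: bounded_lists_def length_Suc_conv)
  then show ?thesis using False by (simp add: num_bounded_lists_def)
qed

lemma num_bounded_lists_complement:
  "num_bounded_lists t m N = num_bounded_lists t m (int t * int m - N)"
proof -
  let ?c = "map (\<lambda>v. t - v)"
  have sum_c: "int (sum_list (?c xs)) = int t * int (length xs) - int (sum_list xs)"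
    if "\<forall>v\<in>set xs. v \<le> t" for xs
    using that by (induction xs) (auto simp: algebra_simps of_nat_diff)
  have c_c: "?c (?c xs) = xs" if "\<forall>v\<in>set xs. v \<le> t" for xs
    using that by (induction xs) auto
  have maps_to: "?c ` bounded_lists t m M \<subseteq> bounded_lists t m (int t * int m - M)" for M
    using sum_c by (auto simp: bounded_lists_def)
  have "bij_betw ?c (bounded_lists t m N) (bounded_lists t m (int t * int m - N))"
    by (rule bij_betw_byWitness[where f' = ?c])
      (use c_c maps_to[of N] maps_to[of "int t * int m - N"] in \<open>auto simp: bounded_lists_def\<close>)
  then show ?thesis by (simp add: num_bounded_lists_def bij_betw_same_card)
qed

definition bounded_lists_incl_excl :: "nat \<Rightarrow> nat \<Rightarrow> int \<Rightarrow> int" where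
  "bounded_lists_incl_excl t m N = (\<Sum>j\<le>m. (-1) ^ j * int (m choose j)
      * binom (N - int j * (int t + 1) + int m - 1) (int m - 1))"

lemma binom_pascal:
  assumes K: "0 \<le> K"
  shows "binom (M + 1) (K + 1) = binom M K + binom M (K + 1)"
proof (cases "M < K")
  case False
  then have "nat (M + 1) = Suc (nat M)" "nat (K + 1) = Suc (nat K)" using K by auto
  then show ?thesis using False K by (auto simp: binom_def)
qed (use K in \<open>simp add: binom_def\<close>)

lemma bounded_lists_incl_excl_neg:
  assumes "1 \<le> m" "N < 0"
  shows "bounded_lists_incl_excl t m N = 0"
proof -
  have "N - int j * (int t + 1) + int m - 1 < int m - 1" for j
  proof -
    have "0 \<le> int j * (int t + 1)" by simp
    with assms(2) show ?thesis by linarith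
  qed
  then show ?thesis unfolding bounded_lists_incl_excl_def
    by (intro sum.neutral ballI) (simp add: binom_def)
qed

lemma bounded_lists_incl_excl_one:
  "bounded_lists_incl_excl t 1 N = (if 0 \<le> N \<and> N \<le> int t then 1 else 0)"
  by (simp add: bounded_lists_incl_excl_def binom_def)

lemma bounded_lists_incl_excl_recurrence:
  assumes m: "1 \<le> m"
  shows "bounded_lists_incl_excl t (Suc m) N - bounded_lists_incl_excl t (Suc m) (N - 1)
     = bounded_lists_incl_excl t m N - bounded_lists_incl_excl t m (N - int t - 1)"
proof -
  define g where "g N j = binom (N - int j * (int t + 1) + int m - 1) (int m - 1)" for N j
  have diff: "binom (N - int j * (int t + 1) + int (Suc m) - 1) (int (Suc m) - 1)
      - binom (N - 1 - int j * (int t + 1) + int (Suc m) - 1) (int (Suc m) - 1) = g N j" for j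
    using binom_pascal[of "int m - 1" "N - 1 - int j * (int t + 1) + int m"] m
    by (simp add: g_def algebra_simps)
  have "bounded_lists_incl_excl t (Suc m) N - bounded_lists_incl_excl t (Suc m) (N - 1)
      = (\<Sum>j\<le>Suc m. (-1) ^ j * int (Suc m choose j) * g N j)"
    unfolding bounded_lists_incl_excl_def sum_subtractf[symmetric]
    by (rule sum.cong) (simp_all only: diff[symmetric] right_diff_distrib)
  also have "\<dots> = g N 0 + (\<Sum>j\<le>m. (-1) ^ Suc j * int (Suc m choose Suc j) * g N (Suc j))"
    by (subst sum.atMost_Suc_shift) simp
  also have "(\<Sum>j\<le>m. (-1) ^ Suc j * int (Suc m choose Suc j) * g N (Suc j))
      = (\<Sum>j\<le>m. (-1) ^ Suc j * int (m choose Suc j) * g N (Suc j))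
      + (\<Sum>j\<le>m. (-1) ^ Suc j * int (m choose j) * g N (Suc j))"
    by (simp add: sum.distrib[symmetric] algebra_simps)
  also have "g N 0 + ((\<Sum>j\<le>m. (-1) ^ Suc j * int (m choose Suc j) * g N (Suc j))
      + (\<Sum>j\<le>m. (-1) ^ Suc j * int (m choose j) * g N (Suc j)))
      = bounded_lists_incl_excl t m N + (\<Sum>j\<le>m. (-1) ^ Suc j * int (m choose j) * g N (Suc j))"
  proof -
    have "g N 0 + (\<Sum>j\<le>m. (-1) ^ Suc j * int (m choose Suc j) * g N (Suc j))
        = (\<Sum>j\<le>Suc m. (-1) ^ j * int (m choose j) * g N j)"
      by (subst sum.atMost_Suc_shift) simp
    also have "\<dots> = bounded_lists_incl_excl t m N" by (simp add: bounded_lists_incl_excl_def g_def)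
    finally show ?thesis by (simp add: add.assoc)
  qed
  also have "(\<Sum>j\<le>m. (-1) ^ Suc j * int (m choose j) * g N (Suc j))
      = - bounded_lists_incl_excl t m (N - int t - 1)"
    by (simp add: bounded_lists_incl_excl_def g_def sum_negf[symmetric] algebra_simps)
  finally show ?thesis by simp
qed

lemma int_fun_eqI_by_differences:
  fixes f g :: "int \<Rightarrow> int"
  assumes neg: "\<And>N. N < 0 \<Longrightarrow> f N = g N"
    and diff: "\<And>N. f N - f (N - 1) = g N - g (N - 1)"
  shows "f N = g N"
proof (cases "N < 0")
  case False
  then have "-1 \<le> N" by simp
  then show ?thesis
  proof (induction N rule: int_ge_induct)
    case base
    then show ?case by (rule neg) simp
  next
    case (step N)
    then show ?case using diff[of "N + 1"] by simp
  qed
qed (rule neg)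

lemma num_bounded_lists_eq_incl_excl:
  "1 \<le> m \<Longrightarrow> num_bounded_lists t m N = bounded_lists_incl_excl t m N"
proof (induction m arbitrary: N rule: nat_induct_at_least)
  case base
  then show ?case using num_bounded_lists_one[of t N] bounded_lists_incl_excl_one[of t N] by simp
next
  case (Suc m)
  show ?case
  proof (rule int_fun_eqI_by_differences[where f = "num_bounded_lists t (Suc m)"
        and g = "bounded_lists_incl_excl t (Suc m)"])
    show "num_bounded_lists t (Suc m) N = bounded_lists_incl_excl t (Suc m) N" if "N < 0" for N
      using that Suc.hyps by (simp add: num_bounded_lists_neg bounded_lists_incl_excl_neg)
    show "num_bounded_lists t (Suc m) N - num_bounded_lists t (Suc m) (N - 1)
        = bounded_lists_incl_excl t (Suc m) N - bounded_lists_incl_excl t (Suc m) (N - 1)" for N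
      unfolding num_bounded_lists_recurrence bounded_lists_incl_excl_recurrence[OF Suc.hyps] Suc.IH ..
  qed
qed

lemma F_eq_num_bounded_lists:
  assumes "1 \<le> a + b"
  shows "F a b c t = num_bounded_lists t (a + b) (int t * int b + c)"
proof -
  have "F a b c t = bounded_lists_incl_excl t (a + b) (int t * int b + c)"
    unfolding F_def bounded_lists_incl_excl_def atLeast0AtMost
    by (intro sum.cong refl) (simp add: algebra_simps)
  then show ?thesis using num_bounded_lists_eq_incl_excl[OF assms] by simp
qed

lemma F_swap:
  assumes "1 \<le> a + b"
  shows "F b a (- c) t = F a b c t"
proof -
  have "F b a (- c) t = num_bounded_lists t (a + b) (int t * int a - c)"
    using F_eq_num_bounded_lists[of b a "- c" t] assms by (simp add: add.commute)
  also have "\<dots> = num_bounded_lists t (a + b) (int t * int (a + b) - (int t * int a - c))"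
    by (rule num_bounded_lists_complement)
  also have "int t * int (a + b) - (int t * int a - c) = int t * int b + c"
    by (simp add: algebra_simps)
  finally show ?thesis using F_eq_num_bounded_lists[OF assms] by simp
qed

lemma i_r_schubert_set_4_eq_F_sum:
  assumes "0 < b" "0 < d" "0 < t"
  shows "int (i_r [a,b,c,d] t) = (\<Sum>j = 0..int (t * min a d). F a b j t * F c d (- j) t)"
proof -
  have "F a b j t * F c d (- j) t
      = num_bounded_lists t (a + b) (int t * int b + j) * num_bounded_lists t (c + d) (int t * int d - j)"
    for j
    using F_eq_num_bounded_lists[of a b j t] F_eq_num_bounded_lists[of c d "- j" t] assms by simp
  then show ?thesis
    using i_r_schubert_set_4[of b t a c d] card_prefix_constrained_lists assms by simp
qed

theorem mainTheorem7:
  fixes a b c d t :: nat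
  assumes "a > 0" "b > 0" "c > 0" "d > 0" "t > 0"
  shows "int (i_r [a, b, c, d] t) = (\<Sum>j = 0..int (t * min a d). F a b j t * F c d (- j) t)
       \<and> int (i_r [d, c, b, a] t) = (\<Sum>j = 0..int (t * min a d). F a b j t * F c d (- j) t)"
proof
  show "int (i_r [a, b, c, d] t) = (\<Sum>j = 0..int (t * min a d). F a b j t * F c d (- j) t)"
    using i_r_schubert_set_4_eq_F_sum assms by simp
  have "int (i_r [d, c, b, a] t) = (\<Sum>j = 0..int (t * min d a). F d c j t * F b a (- j) t)"
    using i_r_schubert_set_4_eq_F_sum assms by simp
  also have "\<dots> = (\<Sum>j = 0..int (t * min a d). F a b j t * F c d (- j) t)"
  proof -
    have "F d c j t * F b a (- j) t = F a b j t * F c d (- j) t" for j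
      using F_swap[of c d "- j" t] F_swap[of a b j t] assms by simp
    then show ?thesis by (simp add: min.commute)
  qed
  finally show "int (i_r [d, c, b, a] t) = (\<Sum>j = 0..int (t * min a d). F a b j t * F c d (- j) t)" .
qed

end
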